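(* Let $R$ be a domain and let $G$ be a finite undirected graph without loops with vertex set $A=\{a_1,\dots,a_n\}$, $n\geqslant 2$, such that the complement graph $\overline{G}$ is connected. Suppose the partially commutative metabelian Lie algebra $\mathcal{M}(A;G)=L_1\oplus L_2$ is a direct sum of two subalgebras such that for every $i\in\{1,\dots,n\}$ we have $(a_i)_1=a_i+g_i$ and $(a_i)_2=-g_i$ with $g_i\in\mathcal{M}(A;G)$ and $a_i\notin\mathrm{supp}(\omega_1(g_i))$. Then $g_i=0$ for all $i\in\{1,\dots,n\}$.
   Context: All Lie algebras are over the domain $R$. The complement graph $\overline{G}$ has vertex set $A$, with distinct vertices adjacent iff they are not adjacent in $G$. $\mathcal{M}(A;G)$ is the Lie $R$-algebra presented in the variety of metabelian Lie algebras (identity $[[x,y],[z,t]]=0$) by generators $A$ and relations $[a_p,a_q]=0$ for all edges $\{a_p,a_q\}$ of $G$. Since relations and identities are multi-homogeneous, every element $h$ is uniquely a sum of nonzero multi-homogeneous components (multi-degree of a Lie monomial = vector counting occurrences of each $a_p$). $\mathrm{supp}(h)$ is the set of $a_p$ occurring with nonzero exponent in the multi-degree of some component of $h$; $\omega_1(h)$ is the sum of the components of length $1$. A direct sum $L=L_1\oplus L_2$ of subalgebras means $L_1,L_2$ are subalgebras, $L=L_1\oplus L_2$ as $R$-modules and $[L_1,L_2]=0$; for $h\in L$, $(h)_1\in L_1$, $(h)_2\in L_2$ are the unique elements with $h=(h)_1+(h)_2$. *)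

theory Defs
  imports Main
begin

datatype 'a lterm = Gen 'a | Br "'a lterm" "'a lterm"

fun gens :: "'a lterm \<Rightarrow> 'a set" where
  "gens (Gen a) = {a}"
| "gens (Br u v) = gens u \<union> gens v"

fun mdeg :: "'a lterm \<Rightarrow> 'a \<Rightarrow> nat" where
  "mdeg (Gen a) = (\<lambda>b. if b = a then 1 else 0)"
| "mdeg (Br u v) = (\<lambda>b. mdeg u b + mdeg v b)"

fun llen :: "'a lterm \<Rightarrow> nat" where
  "llen (Gen a) = 1"
| "llen (Br u v) = llen u + llen v"

section \<open>The free nonassociative R-algebra on A (finite R-combinations of bracketings)\<close>

definition FA :: "'a set \<Rightarrow> ('a lterm \<Rightarrow> 'r::idom) set" where
  "FA A = {f. finite {t. f t \<noteq> 0} \<and> (\<forall>t. f t \<noteq> 0 \<longrightarrow> gens t \<subseteq> A)}"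

definition fzero :: "'a lterm \<Rightarrow> 'r::idom" where "fzero = (\<lambda>t. 0)"
definition fadd :: "('a lterm \<Rightarrow> 'r::idom) \<Rightarrow> ('a lterm \<Rightarrow> 'r) \<Rightarrow> 'a lterm \<Rightarrow> 'r" where
  "fadd f g = (\<lambda>t. f t + g t)"
definition fsmult :: "'r::idom \<Rightarrow> ('a lterm \<Rightarrow> 'r) \<Rightarrow> 'a lterm \<Rightarrow> 'r" where
  "fsmult c f = (\<lambda>t. c * f t)"
definition fdiff :: "('a lterm \<Rightarrow> 'r::idom) \<Rightarrow> ('a lterm \<Rightarrow> 'r) \<Rightarrow> 'a lterm \<Rightarrow> 'r" where
  "fdiff f g = (\<lambda>t. f t - g t)"
definition fgen :: "'a \<Rightarrow> 'a lterm \<Rightarrow> 'r::idom" where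
  "fgen a = (\<lambda>t. if t = Gen a then 1 else 0)"
fun fbr :: "('a lterm \<Rightarrow> 'r::idom) \<Rightarrow> ('a lterm \<Rightarrow> 'r) \<Rightarrow> 'a lterm \<Rightarrow> 'r" where
  "fbr f g (Gen a) = 0"
| "fbr f g (Br u v) = f u * g v"

section \<open>The ideal defining M(A;G): Lie identities, metabelian identity, relations [a_p,a_q] for edges\<close>

inductive_set rel_ideal :: "'a set \<Rightarrow> ('a \<Rightarrow> 'a \<Rightarrow> bool) \<Rightarrow> ('a lterm \<Rightarrow> 'r::idom) set"
  for A :: "'a set" and E :: "'a \<Rightarrow> 'a \<Rightarrow> bool" where
  alt: "x \<in> FA A \<Longrightarrow> fbr x x \<in> rel_ideal A E"
| jacobi: "\<lbrakk>x \<in> FA A; y \<in> FA A; z \<in> FA A\<rbrakk> \<Longrightarrow>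
     fadd (fadd (fbr x (fbr y z)) (fbr y (fbr z x))) (fbr z (fbr x y)) \<in> rel_ideal A E"
| metab: "\<lbrakk>x \<in> FA A; y \<in> FA A; z \<in> FA A; w \<in> FA A\<rbrakk> \<Longrightarrow>
     fbr (fbr x y) (fbr z w) \<in> rel_ideal A E"
| edge: "\<lbrakk>p \<in> A; q \<in> A; E p q\<rbrakk> \<Longrightarrow> fbr (fgen p) (fgen q) \<in> rel_ideal A E"
| zero: "fzero \<in> rel_ideal A E"
| add: "\<lbrakk>x \<in> rel_ideal A E; y \<in> rel_ideal A E\<rbrakk> \<Longrightarrow> fadd x y \<in> rel_ideal A E"
| smult: "x \<in> rel_ideal A E \<Longrightarrow> fsmult c x \<in> rel_ideal A E"
| brl: "\<lbrakk>x \<in> rel_ideal A E; y \<in> FA A\<rbrakk> \<Longrightarrow> fbr x y \<in> rel_ideal A E"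
| brr: "\<lbrakk>x \<in> rel_ideal A E; y \<in> FA A\<rbrakk> \<Longrightarrow> fbr y x \<in> rel_ideal A E"

definition Mcls :: "'a set \<Rightarrow> ('a \<Rightarrow> 'a \<Rightarrow> bool) \<Rightarrow> ('a lterm \<Rightarrow> 'r::idom) \<Rightarrow> ('a lterm \<Rightarrow> 'r) set" where
  "Mcls A E x = {y \<in> FA A. fdiff x y \<in> rel_ideal A E}"

definition Mset :: "'a set \<Rightarrow> ('a \<Rightarrow> 'a \<Rightarrow> bool) \<Rightarrow> ('a lterm \<Rightarrow> 'r::idom) set set" where
  "Mset A E = Mcls A E ` FA A"

definition Mrep :: "('a lterm \<Rightarrow> 'r::idom) set \<Rightarrow> 'a lterm \<Rightarrow> 'r" where
  "Mrep X = (SOME x. x \<in> X)"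

definition Mzero :: "'a set \<Rightarrow> ('a \<Rightarrow> 'a \<Rightarrow> bool) \<Rightarrow> ('a lterm \<Rightarrow> 'r::idom) set" where
  "Mzero A E = Mcls A E fzero"
definition Madd where
  "Madd A E X Y = Mcls A E (fadd (Mrep X) (Mrep Y))"
definition Msmult where
  "Msmult A E c X = Mcls A E (fsmult c (Mrep X))"
definition Mbr where
  "Mbr A E X Y = Mcls A E (fbr (Mrep X) (Mrep Y))"
definition Mgen where
  "Mgen A E a = Mcls A E (fgen a)"

definition Mcomp :: "'a set \<Rightarrow> ('a \<Rightarrow> 'a \<Rightarrow> bool) \<Rightarrow> ('a \<Rightarrow> nat) \<Rightarrow> ('a lterm \<Rightarrow> 'r::idom) set \<Rightarrow> ('a lterm \<Rightarrow> 'r) set" where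
  "Mcomp A E d X = Mcls A E (\<lambda>t. if mdeg t = d then Mrep X t else 0)"

definition Msupp :: "'a set \<Rightarrow> ('a \<Rightarrow> 'a \<Rightarrow> bool) \<Rightarrow> ('a lterm \<Rightarrow> 'r::idom) set \<Rightarrow> 'a set" where
  "Msupp A E X = {a \<in> A. \<exists>d. d a \<noteq> 0 \<and> Mcomp A E d X \<noteq> Mzero A E}"

definition omega1 :: "'a set \<Rightarrow> ('a \<Rightarrow> 'a \<Rightarrow> bool) \<Rightarrow> ('a lterm \<Rightarrow> 'r::idom) set \<Rightarrow> ('a lterm \<Rightarrow> 'r) set" where
  "omega1 A E X = Mcls A E (\<lambda>t. if llen t = 1 then Mrep X t else 0)"

definition subalg :: "'a set \<Rightarrow> ('a \<Rightarrow> 'a \<Rightarrow> bool) \<Rightarrow> ('a lterm \<Rightarrow> 'r::idom) set set \<Rightarrow> bool" where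
  "subalg A E L \<longleftrightarrow> L \<subseteq> Mset A E \<and> Mzero A E \<in> L
     \<and> (\<forall>X\<in>L. \<forall>Y\<in>L. Madd A E X Y \<in> L)
     \<and> (\<forall>c. \<forall>X\<in>L. Msmult A E c X \<in> L)
     \<and> (\<forall>X\<in>L. \<forall>Y\<in>L. Mbr A E X Y \<in> L)"

definition direct_sum :: "'a set \<Rightarrow> ('a \<Rightarrow> 'a \<Rightarrow> bool) \<Rightarrow> ('a lterm \<Rightarrow> 'r::idom) set set \<Rightarrow> ('a lterm \<Rightarrow> 'r) set set \<Rightarrow> bool" where
  "direct_sum A E L1 L2 \<longleftrightarrow> subalg A E L1 \<and> subalg A E L2
     \<and> (\<forall>H\<in>Mset A E. \<exists>!p. fst p \<in> L1 \<and> snd p \<in> L2 \<and> H = Madd A E (fst p) (snd p))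
     \<and> (\<forall>X\<in>L1. \<forall>Y\<in>L2. Mbr A E X Y = Mzero A E)"

definition proj1 where
  "proj1 A E L1 L2 H = (THE X. X \<in> L1 \<and> (\<exists>Y\<in>L2. H = Madd A E X Y))"
definition proj2 where
  "proj2 A E L1 L2 H = (THE Y. Y \<in> L2 \<and> (\<exists>X\<in>L1. H = Madd A E X Y))"

definition simple_graph :: "'a set \<Rightarrow> ('a \<Rightarrow> 'a \<Rightarrow> bool) \<Rightarrow> bool" where
  "simple_graph A E \<longleftrightarrow> finite A \<and> (\<forall>x y. E x y \<longrightarrow> x \<in> A \<and> y \<in> A)
     \<and> (\<forall>x y. E x y \<longrightarrow> E y x) \<and> (\<forall>x. \<not> E x x)"

definition compl_connected :: "'a set \<Rightarrow> ('a \<Rightarrow> 'a \<Rightarrow> bool) \<Rightarrow> bool" where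
  "compl_connected A E \<longleftrightarrow>
     (\<forall>x\<in>A. \<forall>y\<in>A. (\<lambda>u v. u \<in> A \<and> v \<in> A \<and> u \<noteq> v \<and> \<not> E u v)\<^sup>*\<^sup>* x y)"

end

theory Submission
  imports Defs
begin

(* Two numerical invariants are well defined on M(A;G): the coefficient of a generator a
   (the linear part) and, for a non-edge {p,q}, the difference of the coefficients of
   [a_p,a_q] and [a_q,a_p]. Write v_jq for the a_q-coefficient of g_j. Since (a_i)_1 = a_i + g_i
   commutes with (a_j)_2 = -g_j, the [a_p,a_q]-invariant of their bracket gives
   (\<delta>_pi + v_ip) v_jq = (\<delta>_qi + v_iq) v_jp for every non-edge {p,q}. The support condition says
   v_ii = 0, and choosing for q a neighbour i in the connected complement graph yields first
   v_iq = 0 and then v_jq = 0. So every g_j lies in [M,M]. The projection onto L_2 is a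
   homomorphism mapping every generator into [M,M], hence it maps [M,M] into
   [[M,M],[M,M]] = 0; since g_j lies in L_2, g_j = (g_j)_2 = 0. *)

definition fmon :: "'a lterm \<Rightarrow> 'a lterm \<Rightarrow> 'r::idom" where
  "fmon t = (\<lambda>s. if s = t then 1 else 0)"

lemma fgen_eq_fmon: "fgen a = fmon (Gen a)"
  by (simp add: fgen_def fmon_def fun_eq_iff)

lemma fbr_fmon: "fbr (fmon u) (fmon v) = fmon (Br u v)"
  by (rule ext, case_tac x) (simp_all add: fmon_def)

lemma fun_upd_eq_fadd_fmon: "f t = 0 \<Longrightarrow> f(t := c) = fadd f (fsmult c (fmon t))"
  by (auto simp: fun_eq_iff fadd_def fsmult_def fmon_def)

lemma fbr_fadd_left: "fbr (fadd x y) z = fadd (fbr x z) (fbr y z)"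
  by (rule ext, case_tac xa) (simp_all add: fadd_def algebra_simps)

lemma fbr_fadd_right: "fbr z (fadd x y) = fadd (fbr z x) (fbr z y)"
  by (rule ext, case_tac xa) (simp_all add: fadd_def algebra_simps)

lemma fbr_fsmult_left: "fbr (fsmult c x) z = fsmult c (fbr x z)"
  by (rule ext, case_tac xa) (simp_all add: fsmult_def algebra_simps)

lemma fbr_fsmult_right: "fbr z (fsmult c x) = fsmult c (fbr z x)"
  by (rule ext, case_tac xa) (simp_all add: fsmult_def algebra_simps)

lemma fbr_fzero_left: "fbr fzero z = fzero"
  by (rule ext, case_tac x) (simp_all add: fzero_def)

lemma fbr_fzero_right: "fbr z fzero = fzero"
  by (rule ext, case_tac x) (simp_all add: fzero_def)

lemma FA_fzero: "fzero \<in> FA A"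
  by (simp add: FA_def fzero_def)

lemma FA_fadd: "x \<in> FA A \<Longrightarrow> y \<in> FA A \<Longrightarrow> fadd x y \<in> FA A"
  unfolding FA_def fadd_def
  by (auto intro: finite_subset[of _ "{t. x t \<noteq> 0} \<union> {t. y t \<noteq> 0}"])
    (metis add.right_neutral subsetD)

lemma FA_fsmult: "x \<in> FA A \<Longrightarrow> fsmult c x \<in> FA A"
  unfolding FA_def fsmult_def
  by (auto intro: finite_subset[of _ "{t. x t \<noteq> 0}"])

lemma FA_restrict: "x \<in> FA A \<Longrightarrow> (\<lambda>t. if P t then x t else 0) \<in> FA A"
  unfolding FA_def
  by (auto intro: finite_subset[of _ "{t. x t \<noteq> 0}"])

lemma FA_fun_upd_zero: "x \<in> FA A \<Longrightarrow> x(t := 0) \<in> FA A"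
  unfolding FA_def
  by (auto intro: finite_subset[of _ "{t. x t \<noteq> 0}"])

lemma FA_fbr:
  assumes "x \<in> FA A" "y \<in> FA A"
  shows "fbr x y \<in> FA A"
proof -
  have "{t. fbr x y t \<noteq> 0} \<subseteq> (\<lambda>(u, v). Br u v) ` ({t. x t \<noteq> 0} \<times> {t. y t \<noteq> 0})"
  proof
    fix t assume "t \<in> {t. fbr x y t \<noteq> 0}"
    then show "t \<in> (\<lambda>(u, v). Br u v) ` ({t. x t \<noteq> 0} \<times> {t. y t \<noteq> 0})"
      by (cases t) auto
  qed
  moreover have "finite ({t. x t \<noteq> 0} \<times> {t. y t \<noteq> 0})"
    using assms by (simp add: FA_def)
  ultimately have "finite {t. fbr x y t \<noteq> 0}"
    by (blast intro: finite_subset)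
  moreover have "gens t \<subseteq> A" if "fbr x y t \<noteq> 0" for t
    using that assms by (cases t) (auto simp: FA_def)
  ultimately show ?thesis by (simp add: FA_def)
qed

lemma FA_fmon: "gens t \<subseteq> A \<Longrightarrow> fmon t \<in> FA A"
  by (simp add: FA_def fmon_def)

lemma FA_fgen: "a \<in> A \<Longrightarrow> fgen a \<in> FA A"
  by (simp add: fgen_eq_fmon FA_fmon)

lemma finite_support_induct:
  assumes "finite {t. f t \<noteq> 0}" and "P (\<lambda>_. 0)"
    and "\<And>f t c. P f \<Longrightarrow> f t = 0 \<Longrightarrow> P (f(t := c))"
  shows "P f"
proof -
  have "\<forall>f. {t. f t \<noteq> 0} = S \<longrightarrow> P f" if "finite S" for S
    using that
  proof (induction S rule: finite_induct)
    case empty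
    then show ?case using assms(2) by (auto simp: fun_eq_iff)
  next
    case (insert x S)
    show ?case
    proof (intro allI impI)
      fix f :: "'a \<Rightarrow> 'b" assume f: "{t. f t \<noteq> 0} = insert x S"
      then have "{t. (f(x := 0)) t \<noteq> 0} = S" using insert(2) by auto
      then have "P (f(x := 0))" using insert(3) by blast
      from assms(3)[OF this, of x "f x"] show "P f" by simp
    qed
  qed
  then show ?thesis using assms(1) by blast
qed

definition zero_lin_part :: "('a lterm \<Rightarrow> 'r::idom) \<Rightarrow> bool" where
  "zero_lin_part f \<longleftrightarrow> (\<forall>a. f (Gen a) = 0)"

lemma zero_lin_part_induct [consumes 2, case_names zero step]:
  assumes "f \<in> FA A" "zero_lin_part f"
    and zero: "Q fzero"
    and step: "\<And>f u v c. f \<in> FA A \<Longrightarrow> zero_lin_part f \<Longrightarrow> Q f \<Longrightarrow> gens u \<subseteq> A \<Longrightarrow> gens v \<subseteq> A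
      \<Longrightarrow> Q (fadd f (fsmult c (fmon (Br u v))))"
  shows "Q f"
proof -
  have "finite {t. f t \<noteq> 0}" using assms(1) by (simp add: FA_def)
  then have "f \<in> FA A \<longrightarrow> zero_lin_part f \<longrightarrow> Q f"
  proof (rule finite_support_induct)
    show "(\<lambda>_. 0) \<in> FA A \<longrightarrow> zero_lin_part (\<lambda>_. 0) \<longrightarrow> Q (\<lambda>_. 0)"
      using zero by (simp add: fzero_def)
  next
    fix g :: "'a lterm \<Rightarrow> 'b" and t c
    assume IH: "g \<in> FA A \<longrightarrow> zero_lin_part g \<longrightarrow> Q g" and gt: "g t = 0"
    show "g(t := c) \<in> FA A \<longrightarrow> zero_lin_part (g(t := c)) \<longrightarrow> Q (g(t := c))"
    proof (intro impI)
      assume FA_upd: "g(t := c) \<in> FA A" and lin_upd: "zero_lin_part (g(t := c))"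
      have "g = (g(t := c))(t := 0)" using gt by (simp add: fun_eq_iff)
      then have g: "g \<in> FA A" using FA_fun_upd_zero[OF FA_upd, of t] by simp
      have lin: "zero_lin_part g"
        using lin_upd gt unfolding zero_lin_part_def by (metis fun_upd_apply)
      show "Q (g(t := c))"
      proof (cases "c = 0")
        case True
        then show ?thesis using IH g lin gt by (simp add: fun_upd_idem)
      next
        case False
        then have "gens t \<subseteq> A" using FA_upd by (auto simp: FA_def)
        moreover obtain u v where "t = Br u v"
          using lin_upd False unfolding zero_lin_part_def by (cases t) (auto, metis fun_upd_same)
        ultimately show ?thesis
          using step[OF g lin IH[rule_format, OF g lin], of u v c]
            fun_upd_eq_fadd_fmon[of g t c, OF gt]
          by simp
      qed
    qed
  qed
  then show ?thesis using assms(1,2) by simp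
qed

lemma rel_ideal_fdiff: "x \<in> rel_ideal A E \<Longrightarrow> y \<in> rel_ideal A E \<Longrightarrow> fdiff x y \<in> rel_ideal A E"
proof -
  assume "x \<in> rel_ideal A E" "y \<in> rel_ideal A E"
  then have "fadd x (fsmult (-1) y) \<in> rel_ideal A E" by (intro rel_ideal.add rel_ideal.smult)
  moreover have "fadd x (fsmult (-1) y) = fdiff x y"
    by (simp add: fun_eq_iff fadd_def fsmult_def fdiff_def)
  ultimately show ?thesis by simp
qed

(* Among the defining relations only the alternating law [x,x] has terms of degree two, and
   these are symmetric in [a_p,a_q] and [a_q,a_p]; the edge relations break this symmetry,
   which is why the degree-two invariant below is only taken at non-edges. *)
lemma rel_ideal_low_degree_coeffs:
  assumes "x \<in> rel_ideal A E"
  shows "(\<forall>a. x (Gen a) = 0) \<and>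
    (\<forall>p q. \<not> E p q \<longrightarrow> \<not> E q p \<longrightarrow> x (Br (Gen p) (Gen q)) = x (Br (Gen q) (Gen p)))"
  using assms
proof (induction rule: rel_ideal.induct)
  case (jacobi x y z)
  then show ?case by (simp add: fadd_def)
next
  case (edge p q)
  then show ?case by (auto simp: fgen_def)
qed (auto simp: fadd_def fsmult_def fzero_def)

lemma rel_ideal_fbr_swap:
  assumes "x \<in> FA A" "y \<in> FA A" "fbr y x \<in> rel_ideal A E"
  shows "fbr x y \<in> rel_ideal A E"
proof -
  let ?s = "fadd x y"
  have "fdiff (fdiff (fdiff (fbr ?s ?s) (fbr x x)) (fbr y y)) (fbr y x) \<in> rel_ideal A E"
    using assms by (intro rel_ideal_fdiff rel_ideal.alt FA_fadd)
  moreover have "fdiff (fdiff (fdiff (fbr ?s ?s) (fbr x x)) (fbr y y)) (fbr y x) = fbr x y"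
    by (rule ext, case_tac xa) (simp_all add: fdiff_def fadd_def algebra_simps)
  ultimately show ?thesis by simp
qed

lemma fbr_zero_lin_part_in_rel_ideal:
  assumes "x \<in> FA A" "zero_lin_part x" "y \<in> FA A" "zero_lin_part y"
  shows "fbr x y \<in> rel_ideal A E"
proof -
  have fmon_br: "fbr (fmon (Br u v)) y \<in> rel_ideal A E" if "gens u \<subseteq> A" "gens v \<subseteq> A" for u v
    using assms(3,4)
  proof (induction rule: zero_lin_part_induct)
    case zero
    then show ?case by (simp add: fbr_fzero_right rel_ideal.zero)
  next
    case (step f w z c)
    have "fbr (fbr (fmon u) (fmon v)) (fbr (fmon w) (fmon z)) \<in> rel_ideal A E"
      using that step by (intro rel_ideal.metab FA_fmon)
    then show ?case
      unfolding fbr_fmon fbr_fadd_right fbr_fsmult_right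
      using step by (intro rel_ideal.add rel_ideal.smult)
  qed
  from assms(1,2) show ?thesis
  proof (induction rule: zero_lin_part_induct)
    case zero
    then show ?case by (simp add: fbr_fzero_left rel_ideal.zero)
  next
    case (step f u v c)
    then show ?case
      unfolding fbr_fadd_left fbr_fsmult_left using fmon_br by (intro rel_ideal.add rel_ideal.smult)
  qed
qed

lemma Mcls_self: "x \<in> FA A \<Longrightarrow> x \<in> Mcls A E x"
  using rel_ideal.zero[of A E] by (simp add: Mcls_def fdiff_def fzero_def)

lemma Mrep_Mcls: "x \<in> FA A \<Longrightarrow> Mrep (Mcls A E x) \<in> Mcls A E x"
  unfolding Mrep_def by (rule someI[of "\<lambda>y. y \<in> Mcls A E x"], erule Mcls_self)

lemma FA_Mrep_Mcls: "x \<in> FA A \<Longrightarrow> Mrep (Mcls A E x) \<in> FA A"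
  using Mrep_Mcls[of x A E] by (simp add: Mcls_def)

lemma rel_ideal_fdiff_Mrep_Mcls: "x \<in> FA A \<Longrightarrow> fdiff x (Mrep (Mcls A E x)) \<in> rel_ideal A E"
  using Mrep_Mcls[of x A E] by (simp add: Mcls_def)

lemma Mcls_eq_iff:
  assumes "x \<in> FA A" "y \<in> FA A"
  shows "Mcls A E x = Mcls A E y \<longleftrightarrow> fdiff x y \<in> rel_ideal A E"
proof
  assume "Mcls A E x = Mcls A E y"
  then have "y \<in> Mcls A E x" using Mcls_self[OF assms(2)] by simp
  then show "fdiff x y \<in> rel_ideal A E" by (simp add: Mcls_def)
next
  assume xy: "fdiff x y \<in> rel_ideal A E"
  have "fdiff x z \<in> rel_ideal A E \<longleftrightarrow> fdiff y z \<in> rel_ideal A E" for z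
  proof
    assume "fdiff x z \<in> rel_ideal A E"
    from rel_ideal_fdiff[OF this xy] show "fdiff y z \<in> rel_ideal A E"
      by (simp add: fdiff_def)
  next
    assume "fdiff y z \<in> rel_ideal A E"
    from rel_ideal.add[OF xy this] show "fdiff x z \<in> rel_ideal A E"
      by (simp add: fdiff_def fadd_def)
  qed
  then show "Mcls A E x = Mcls A E y" by (simp add: Mcls_def)
qed

lemma Mcls_in_Mset: "x \<in> FA A \<Longrightarrow> Mcls A E x \<in> Mset A E"
  by (simp add: Mset_def)

lemma
  assumes "X \<in> Mset A E"
  shows FA_Mrep: "Mrep X \<in> FA A" and Mcls_Mrep: "Mcls A E (Mrep X) = X"
proof -
  obtain x where x: "x \<in> FA A" "X = Mcls A E x" using assms by (auto simp: Mset_def)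
  then show "Mrep X \<in> FA A" using FA_Mrep_Mcls by blast
  then show "Mcls A E (Mrep X) = X"
    using x rel_ideal_fdiff_Mrep_Mcls[OF x(1)] Mcls_eq_iff by blast
qed

lemma Mcls_eq_Mzero_iff:
  assumes "x \<in> FA A"
  shows "Mcls A E x = Mzero A E \<longleftrightarrow> x \<in> rel_ideal A E"
proof -
  have "fdiff x fzero = x" by (simp add: fun_eq_iff fdiff_def fzero_def)
  then show ?thesis unfolding Mzero_def using Mcls_eq_iff[OF assms FA_fzero] by simp
qed

lemma Madd_Mcls:
  assumes "x \<in> FA A" "y \<in> FA A"
  shows "Madd A E (Mcls A E x) (Mcls A E y) = Mcls A E (fadd x y)"
proof -
  let ?x = "Mrep (Mcls A E x)" and ?y = "Mrep (Mcls A E y)"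
  have "fdiff (fadd x y) (fadd ?x ?y) = fadd (fdiff x ?x) (fdiff y ?y)"
    by (simp add: fun_eq_iff fadd_def fdiff_def)
  moreover have "\<dots> \<in> rel_ideal A E"
    using assms by (intro rel_ideal.add rel_ideal_fdiff_Mrep_Mcls)
  ultimately have "Mcls A E (fadd x y) = Mcls A E (fadd ?x ?y)"
    using assms by (subst Mcls_eq_iff) (auto intro: FA_fadd FA_Mrep_Mcls)
  then show ?thesis unfolding Madd_def by simp
qed

lemma Msmult_Mcls:
  assumes "x \<in> FA A"
  shows "Msmult A E c (Mcls A E x) = Mcls A E (fsmult c x)"
proof -
  let ?x = "Mrep (Mcls A E x)"
  have "fdiff (fsmult c x) (fsmult c ?x) = fsmult c (fdiff x ?x)"
    by (simp add: fun_eq_iff fsmult_def fdiff_def algebra_simps)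
  moreover have "\<dots> \<in> rel_ideal A E"
    using assms by (intro rel_ideal.smult rel_ideal_fdiff_Mrep_Mcls)
  ultimately have "Mcls A E (fsmult c x) = Mcls A E (fsmult c ?x)"
    using assms by (subst Mcls_eq_iff) (auto intro: FA_fsmult FA_Mrep_Mcls)
  then show ?thesis unfolding Msmult_def by simp
qed

lemma Mbr_Mcls:
  assumes "x \<in> FA A" "y \<in> FA A"
  shows "Mbr A E (Mcls A E x) (Mcls A E y) = Mcls A E (fbr x y)"
proof -
  let ?x = "Mrep (Mcls A E x)" and ?y = "Mrep (Mcls A E y)"
  have "fdiff (fbr x y) (fbr ?x ?y) = fadd (fbr (fdiff x ?x) y) (fbr ?x (fdiff y ?y))"
    by (rule ext, case_tac xa) (simp_all add: fadd_def fdiff_def algebra_simps)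
  moreover have "\<dots> \<in> rel_ideal A E"
    using assms
    by (intro rel_ideal.add rel_ideal.brl rel_ideal.brr rel_ideal_fdiff_Mrep_Mcls FA_Mrep_Mcls)
  ultimately have "Mcls A E (fbr x y) = Mcls A E (fbr ?x ?y)"
    using assms by (subst Mcls_eq_iff) (auto intro: FA_fbr FA_Mrep_Mcls)
  then show ?thesis unfolding Mbr_def by simp
qed

lemma Mcls_fmon_Br:
  assumes "gens u \<subseteq> A" "gens w \<subseteq> A"
  shows "Mcls A E (fmon (Br u w)) = Mbr A E (Mcls A E (fmon u)) (Mcls A E (fmon w))"
  by (simp add: Mbr_Mcls FA_fmon assms fbr_fmon)

lemma Madd_in_Mset: "X \<in> Mset A E \<Longrightarrow> Y \<in> Mset A E \<Longrightarrow> Madd A E X Y \<in> Mset A E"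
  unfolding Madd_def by (intro Mcls_in_Mset FA_fadd FA_Mrep)

lemma Msmult_in_Mset: "X \<in> Mset A E \<Longrightarrow> Msmult A E c X \<in> Mset A E"
  unfolding Msmult_def by (intro Mcls_in_Mset FA_fsmult FA_Mrep)

lemma Mgen_in_Mset: "a \<in> A \<Longrightarrow> Mgen A E a \<in> Mset A E"
  unfolding Mgen_def by (intro Mcls_in_Mset FA_fgen)

lemma Madd_Mzero_Mzero:
  "Madd A E (Mzero A E) (Mzero A E) = (Mzero A E :: ('a lterm \<Rightarrow> 'r::idom) set)"
  unfolding Mzero_def Madd_Mcls[OF FA_fzero FA_fzero]
  by (simp add: fadd_def fzero_def)

lemma Msmult_Mzero:
  "Msmult A E c (Mzero A E) = (Mzero A E :: ('a lterm \<Rightarrow> 'r::idom) set)"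
  unfolding Mzero_def Msmult_Mcls[OF FA_fzero]
  by (simp add: fsmult_def fzero_def)

lemma Madd_Mzero_left:
  assumes "X \<in> Mset A E"
  shows "Madd A E (Mzero A E) X = X"
  using Madd_Mcls[OF FA_fzero FA_Mrep[OF assms], of E]
  by (simp add: Mcls_Mrep[OF assms] Mzero_def fadd_def fzero_def)

lemma Msmult_minus_one_twice:
  assumes "X \<in> Mset A E"
  shows "Msmult A E (-1) (Msmult A E (-1) X) = X"
proof -
  have "fsmult (-1) (fsmult (-1) (Mrep X)) = Mrep X" by (simp add: fun_eq_iff fsmult_def)
  then show ?thesis
    using Msmult_Mcls[OF FA_Mrep[OF assms], of E]
      Msmult_Mcls[OF FA_fsmult[OF FA_Mrep[OF assms]], of E]
    by (simp add: Mcls_Mrep[OF assms])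
qed

subsection \<open>Invariants of degree one and two\<close>

definition lin_coeff :: "('a lterm \<Rightarrow> 'r::idom) set \<Rightarrow> 'a \<Rightarrow> 'r" where
  "lin_coeff X a = Mrep X (Gen a)"

definition comm_coeff :: "('a lterm \<Rightarrow> 'r::idom) set \<Rightarrow> 'a \<Rightarrow> 'a \<Rightarrow> 'r" where
  "comm_coeff X p q = Mrep X (Br (Gen p) (Gen q)) - Mrep X (Br (Gen q) (Gen p))"

lemma lin_coeff_Mcls: "x \<in> FA A \<Longrightarrow> lin_coeff (Mcls A E x) a = x (Gen a)"
  using rel_ideal_low_degree_coeffs[OF rel_ideal_fdiff_Mrep_Mcls[of x A E]]
  by (simp add: lin_coeff_def fdiff_def)

lemma comm_coeff_Mcls:
  "x \<in> FA A \<Longrightarrow> \<not> E p q \<Longrightarrow> \<not> E q p \<Longrightarrow>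
   comm_coeff (Mcls A E x) p q = x (Br (Gen p) (Gen q)) - x (Br (Gen q) (Gen p))"
  using rel_ideal_low_degree_coeffs[OF rel_ideal_fdiff_Mrep_Mcls[of x A E]]
  by (simp add: comm_coeff_def fdiff_def algebra_simps)

lemma lin_coeff_Mzero: "lin_coeff (Mzero A E) a = 0"
  using lin_coeff_Mcls[where E = E and a = a, OF FA_fzero] by (simp add: Mzero_def fzero_def)

lemma lin_coeff_Mgen:
  assumes "b \<in> A"
  shows "lin_coeff (Mgen A E b) a = (if a = b then 1 else 0)"
  using lin_coeff_Mcls[where E = E and a = a, OF FA_fgen[OF assms]] by (simp add: Mgen_def fgen_def)

lemma lin_coeff_notin:
  assumes "X \<in> Mset A E" "a \<notin> A"
  shows "lin_coeff X a = 0"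
  using FA_Mrep[OF assms(1)] assms(2) by (auto simp: lin_coeff_def FA_def)

lemma lin_coeff_Madd:
  assumes "X \<in> Mset A E" "Y \<in> Mset A E"
  shows "lin_coeff (Madd A E X Y) a = lin_coeff X a + lin_coeff Y a"
  using lin_coeff_Mcls[where E = E and a = a,
      OF FA_fadd[OF FA_Mrep[OF assms(1)] FA_Mrep[OF assms(2)]]]
  by (simp add: Madd_def fadd_def lin_coeff_def)

lemma lin_coeff_Msmult:
  assumes "X \<in> Mset A E"
  shows "lin_coeff (Msmult A E c X) a = c * lin_coeff X a"
  using lin_coeff_Mcls[where E = E and a = a, OF FA_fsmult[OF FA_Mrep[OF assms]]]
  by (simp add: Msmult_def fsmult_def lin_coeff_def)

lemma lin_coeff_Mbr:
  assumes "X \<in> Mset A E" "Y \<in> Mset A E"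
  shows "lin_coeff (Mbr A E X Y) a = 0"
  using lin_coeff_Mcls[where E = E and a = a,
      OF FA_fbr[OF FA_Mrep[OF assms(1)] FA_Mrep[OF assms(2)]]]
  by (simp add: Mbr_def)

lemma comm_coeff_Mbr:
  assumes "X \<in> Mset A E" "Y \<in> Mset A E" "\<not> E p q" "\<not> E q p"
  shows "comm_coeff (Mbr A E X Y) p q
    = lin_coeff X p * lin_coeff Y q - lin_coeff X q * lin_coeff Y p"
  using comm_coeff_Mcls[where E = E,
      OF FA_fbr[OF FA_Mrep[OF assms(1)] FA_Mrep[OF assms(2)]] assms(3,4)]
  by (simp add: Mbr_def lin_coeff_def)

lemma comm_coeff_Mzero:
  assumes "\<not> E p q" "\<not> E q p"
  shows "comm_coeff (Mzero A E) p q = 0"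
  using comm_coeff_Mcls[where E = E, OF FA_fzero assms] by (simp add: Mzero_def fzero_def)

lemma lin_coeff_eq_zero_if_notin_Msupp_omega1:
  assumes "X \<in> Mset A E" "a \<in> A" "a \<notin> Msupp A E (omega1 A E X)"
  shows "lin_coeff X a = 0"
proof -
  let ?x = "\<lambda>t. if llen t = 1 then Mrep X t else 0"
  let ?W = "omega1 A E X"
  have x: "?x \<in> FA A" by (rule FA_restrict[OF FA_Mrep[OF assms(1)]])
  have W: "Mrep ?W \<in> FA A" unfolding omega1_def by (rule FA_Mrep_Mcls[OF x])
  have "mdeg (Gen a) a \<noteq> 0" by simp
  then have "Mcomp A E (mdeg (Gen a)) ?W = Mzero A E"
    using assms(2,3) unfolding Msupp_def by blast
  then have "0 = lin_coeff (Mcomp A E (mdeg (Gen a)) ?W) a"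
    by (simp add: lin_coeff_Mzero)
  also have "\<dots> = lin_coeff ?W a"
    using lin_coeff_Mcls[where E = E and a = a,
        OF FA_restrict[OF W, of "\<lambda>t. mdeg t = mdeg (Gen a)"]]
    by (simp add: Mcomp_def lin_coeff_def)
  also have "\<dots> = lin_coeff X a"
    using lin_coeff_Mcls[where E = E and a = a, OF x] by (simp add: omega1_def lin_coeff_def)
  finally show ?thesis by simp
qed

lemma Mbr_eq_Mzero_if_lin_coeff_zero:
  assumes "X \<in> Mset A E" "Y \<in> Mset A E" "\<forall>a. lin_coeff X a = 0" "\<forall>a. lin_coeff Y a = 0"
  shows "Mbr A E X Y = Mzero A E"
proof -
  have "fbr (Mrep X) (Mrep Y) \<in> rel_ideal A E"
    using assms by (intro fbr_zero_lin_part_in_rel_ideal FA_Mrep)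
      (auto simp: zero_lin_part_def lin_coeff_def)
  then show ?thesis
    unfolding Mbr_def using assms by (simp add: Mcls_eq_Mzero_iff FA_fbr FA_Mrep)
qed

lemma subalgD:
  assumes "subalg A E L"
  shows "L \<subseteq> Mset A E" "Mzero A E \<in> L" "X \<in> L \<Longrightarrow> Y \<in> L \<Longrightarrow> Madd A E X Y \<in> L"
    "X \<in> L \<Longrightarrow> Msmult A E c X \<in> L" "X \<in> L \<Longrightarrow> Y \<in> L \<Longrightarrow> Mbr A E X Y \<in> L"
  using assms unfolding subalg_def by blast+

lemma direct_sumD:
  assumes "direct_sum A E L1 L2"
  shows "subalg A E L1" "subalg A E L2"
    and "X \<in> L1 \<Longrightarrow> Y \<in> L2 \<Longrightarrow> Mbr A E X Y = Mzero A E"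
  using assms by (simp_all add: direct_sum_def)

lemma direct_sum_ex1_decomp:
  assumes "direct_sum A E L1 L2" "H \<in> Mset A E"
  shows "\<exists>!p. fst p \<in> L1 \<and> snd p \<in> L2 \<and> H = Madd A E (fst p) (snd p)"
proof -
  have "\<forall>H\<in>Mset A E. \<exists>!p. fst p \<in> L1 \<and> snd p \<in> L2 \<and> H = Madd A E (fst p) (snd p)"
    using assms(1) unfolding direct_sum_def by (elim conjE)
  then show ?thesis using assms(2) by (rule bspec)
qed

lemma direct_sum_decomp_unique:
  assumes ds: "direct_sum A E L1 L2" and "X \<in> L1" "Y \<in> L2" "X' \<in> L1" "Y' \<in> L2"
    and eq: "Madd A E X Y = Madd A E X' Y'"
  shows "X = X' \<and> Y = Y'"
proof -
  have H: "Madd A E X Y \<in> Mset A E"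
    using assms(2,3) subalgD(1)[OF direct_sumD(1)[OF ds]] subalgD(1)[OF direct_sumD(2)[OF ds]]
    by (intro Madd_in_Mset) auto
  obtain p where
    uniq: "\<forall>q. fst q \<in> L1 \<and> snd q \<in> L2 \<and> Madd A E X Y = Madd A E (fst q) (snd q) \<longrightarrow> q = p"
    using direct_sum_ex1_decomp[OF ds H] by (elim ex1E) blast
  from uniq[rule_format, of "(X, Y)"] uniq[rule_format, of "(X', Y')"]
  show ?thesis using assms(2-5) eq by simp
qed

lemma direct_sum_proj:
  assumes ds: "direct_sum A E L1 L2" and H: "H \<in> Mset A E"
  shows "proj1 A E L1 L2 H \<in> L1" "proj2 A E L1 L2 H \<in> L2"
    and "H = Madd A E (proj1 A E L1 L2 H) (proj2 A E L1 L2 H)"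
proof -
  obtain X Y where XY: "X \<in> L1" "Y \<in> L2" "H = Madd A E X Y"
    using direct_sum_ex1_decomp[OF ds H] by blast
  have uniq: "X' = X \<and> Y' = Y" if "X' \<in> L1" "Y' \<in> L2" "H = Madd A E X' Y'" for X' Y'
    using direct_sum_decomp_unique[OF ds that(1,2) XY(1,2)] that(3) XY(3) by simp
  have "proj1 A E L1 L2 H = X"
    unfolding proj1_def by (rule the_equality) (use XY uniq in blast)+
  moreover have "proj2 A E L1 L2 H = Y"
    unfolding proj2_def by (rule the_equality) (use XY uniq in blast)+
  ultimately show "proj1 A E L1 L2 H \<in> L1" "proj2 A E L1 L2 H \<in> L2"
    "H = Madd A E (proj1 A E L1 L2 H) (proj2 A E L1 L2 H)" using XY by simp_all
qed

lemma proj2_in_Mset: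
  assumes "direct_sum A E L1 L2" "H \<in> Mset A E"
  shows "proj2 A E L1 L2 H \<in> Mset A E"
  using direct_sum_proj(2)[OF assms] subalgD(1)[OF direct_sumD(2)[OF assms(1)]] by blast

lemma proj2_Madd_components:
  assumes ds: "direct_sum A E L1 L2" and "X \<in> L1" "Y \<in> L2"
  shows "proj2 A E L1 L2 (Madd A E X Y) = Y"
proof -
  let ?H = "Madd A E X Y"
  have "?H \<in> Mset A E"
    using assms(2,3) subalgD(1)[OF direct_sumD(1)[OF ds]] subalgD(1)[OF direct_sumD(2)[OF ds]]
    by (blast intro: Madd_in_Mset)
  note proj = direct_sum_proj[OF ds this]
  from direct_sum_decomp_unique[OF ds assms(2,3) proj(1,2,3)] show ?thesis by simp
qed

lemma proj2_Mzero: "direct_sum A E L1 L2 \<Longrightarrow> proj2 A E L1 L2 (Mzero A E) = Mzero A E"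
  using proj2_Madd_components[of A E L1 L2 "Mzero A E" "Mzero A E"]
  by (simp add: Madd_Mzero_Mzero subalgD(2) direct_sumD(1,2))

lemma direct_sum_decomp_Mcls:
  assumes ds: "direct_sum A E L1 L2" and H: "H \<in> Mset A E"
  obtains x1 x2 where "x1 \<in> FA A" "x2 \<in> FA A" "Mcls A E x1 \<in> L1" "Mcls A E x2 \<in> L2"
    "proj2 A E L1 L2 H = Mcls A E x2" "H = Mcls A E (fadd x1 x2)"
proof -
  let ?X = "proj1 A E L1 L2 H" and ?Y = "proj2 A E L1 L2 H"
  have XY: "?X \<in> Mset A E" "?Y \<in> Mset A E"
    using direct_sum_proj(1,2)[OF ds H] subalgD(1)[OF direct_sumD(1)[OF ds]]
      subalgD(1)[OF direct_sumD(2)[OF ds]] by blast+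
  have "Mcls A E (fadd (Mrep ?X) (Mrep ?Y)) = Madd A E ?X ?Y"
    using Madd_Mcls[OF FA_Mrep[OF XY(1)] FA_Mrep[OF XY(2)], of E]
    by (simp only: Mcls_Mrep[OF XY(1)] Mcls_Mrep[OF XY(2)])
  also have "\<dots> = H" using direct_sum_proj(3)[OF ds H] by (rule sym)
  finally have "H = Mcls A E (fadd (Mrep ?X) (Mrep ?Y))" by (rule sym)
  moreover have "Mcls A E (Mrep ?X) \<in> L1" "Mcls A E (Mrep ?Y) \<in> L2" "?Y = Mcls A E (Mrep ?Y)"
    using direct_sum_proj(1,2)[OF ds H] by (simp_all only: Mcls_Mrep[OF XY(1)] Mcls_Mrep[OF XY(2)])
  ultimately show ?thesis using that[OF FA_Mrep[OF XY(1)] FA_Mrep[OF XY(2)]] by blast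
qed

lemma proj2_Madd:
  assumes ds: "direct_sum A E L1 L2" and X: "X \<in> Mset A E" and Y: "Y \<in> Mset A E"
  shows "proj2 A E L1 L2 (Madd A E X Y) = Madd A E (proj2 A E L1 L2 X) (proj2 A E L1 L2 Y)"
proof -
  obtain x1 x2 where x: "x1 \<in> FA A" "x2 \<in> FA A" "Mcls A E x1 \<in> L1" "Mcls A E x2 \<in> L2"
    "proj2 A E L1 L2 X = Mcls A E x2" "X = Mcls A E (fadd x1 x2)"
    using direct_sum_decomp_Mcls[OF ds X] by blast
  obtain y1 y2 where y: "y1 \<in> FA A" "y2 \<in> FA A" "Mcls A E y1 \<in> L1" "Mcls A E y2 \<in> L2"
    "proj2 A E L1 L2 Y = Mcls A E y2" "Y = Mcls A E (fadd y1 y2)"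
    using direct_sum_decomp_Mcls[OF ds Y] by blast
  have "Madd A E X Y = Mcls A E (fadd (fadd x1 x2) (fadd y1 y2))"
    using x y by (simp add: Madd_Mcls FA_fadd)
  also have "fadd (fadd x1 x2) (fadd y1 y2) = fadd (fadd x1 y1) (fadd x2 y2)"
    by (simp add: fun_eq_iff fadd_def algebra_simps)
  also have "Mcls A E \<dots>
      = Madd A E (Madd A E (Mcls A E x1) (Mcls A E y1)) (Madd A E (Mcls A E x2) (Mcls A E y2))"
    using x y by (simp add: Madd_Mcls FA_fadd)
  finally have "Madd A E X Y = \<dots>" .
  moreover have "Madd A E (Mcls A E x1) (Mcls A E y1) \<in> L1"
    using x y by (intro subalgD(3)[OF direct_sumD(1)[OF ds]])
  moreover have "Madd A E (Mcls A E x2) (Mcls A E y2) \<in> L2"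
    using x y by (intro subalgD(3)[OF direct_sumD(2)[OF ds]])
  ultimately show ?thesis using proj2_Madd_components[OF ds] x y by simp
qed

lemma proj2_Msmult:
  assumes ds: "direct_sum A E L1 L2" and X: "X \<in> Mset A E"
  shows "proj2 A E L1 L2 (Msmult A E c X) = Msmult A E c (proj2 A E L1 L2 X)"
proof -
  obtain x1 x2 where x: "x1 \<in> FA A" "x2 \<in> FA A" "Mcls A E x1 \<in> L1" "Mcls A E x2 \<in> L2"
    "proj2 A E L1 L2 X = Mcls A E x2" "X = Mcls A E (fadd x1 x2)"
    using direct_sum_decomp_Mcls[OF ds X] by blast
  have "Msmult A E c X = Mcls A E (fsmult c (fadd x1 x2))"
    using x by (simp add: Msmult_Mcls FA_fadd)
  also have "fsmult c (fadd x1 x2) = fadd (fsmult c x1) (fsmult c x2)"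
    by (simp add: fun_eq_iff fadd_def fsmult_def algebra_simps)
  also have "Mcls A E \<dots> = Madd A E (Msmult A E c (Mcls A E x1)) (Msmult A E c (Mcls A E x2))"
    using x by (simp add: Madd_Mcls Msmult_Mcls FA_fsmult)
  finally have "Msmult A E c X = \<dots>" .
  moreover have "Msmult A E c (Mcls A E x1) \<in> L1"
    using x by (intro subalgD(4)[OF direct_sumD(1)[OF ds]])
  moreover have "Msmult A E c (Mcls A E x2) \<in> L2"
    using x by (intro subalgD(4)[OF direct_sumD(2)[OF ds]])
  ultimately show ?thesis using proj2_Madd_components[OF ds] x by simp
qed

(* The cross terms [x_1, y_2] and [x_2, y_1] vanish because [L_1, L_2] = 0 and the bracket
   is anticommutative modulo the ideal. *)
lemma proj2_Mbr:
  assumes ds: "direct_sum A E L1 L2" and X: "X \<in> Mset A E" and Y: "Y \<in> Mset A E"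
  shows "proj2 A E L1 L2 (Mbr A E X Y) = Mbr A E (proj2 A E L1 L2 X) (proj2 A E L1 L2 Y)"
proof -
  obtain x1 x2 where x: "x1 \<in> FA A" "x2 \<in> FA A" "Mcls A E x1 \<in> L1" "Mcls A E x2 \<in> L2"
    "proj2 A E L1 L2 X = Mcls A E x2" "X = Mcls A E (fadd x1 x2)"
    using direct_sum_decomp_Mcls[OF ds X] by blast
  obtain y1 y2 where y: "y1 \<in> FA A" "y2 \<in> FA A" "Mcls A E y1 \<in> L1" "Mcls A E y2 \<in> L2"
    "proj2 A E L1 L2 Y = Mcls A E y2" "Y = Mcls A E (fadd y1 y2)"
    using direct_sum_decomp_Mcls[OF ds Y] by blast
  have "fbr x1 y2 \<in> rel_ideal A E"
    using direct_sumD(3)[OF ds x(3) y(4)] Mbr_Mcls[OF x(1) y(2)]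
      Mcls_eq_Mzero_iff[OF FA_fbr[OF x(1) y(2)]]
    by simp
  moreover have "fbr x2 y1 \<in> rel_ideal A E"
    using direct_sumD(3)[OF ds y(3) x(4)] Mbr_Mcls[OF y(1) x(2)]
      Mcls_eq_Mzero_iff[OF FA_fbr[OF y(1) x(2)]]
      rel_ideal_fbr_swap[OF x(2) y(1)] by simp
  moreover have "fdiff (fbr (fadd x1 x2) (fadd y1 y2)) (fadd (fbr x1 y1) (fbr x2 y2))
      = fadd (fbr x1 y2) (fbr x2 y1)"
    by (rule ext, case_tac x) (simp_all add: fadd_def fdiff_def algebra_simps)
  ultimately have
    "Mcls A E (fbr (fadd x1 x2) (fadd y1 y2)) = Mcls A E (fadd (fbr x1 y1) (fbr x2 y2))"
    using x(1,2) y(1,2) by (subst Mcls_eq_iff) (simp_all add: rel_ideal.add FA_fbr FA_fadd)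
  then have "Mbr A E X Y
      = Madd A E (Mbr A E (Mcls A E x1) (Mcls A E y1)) (Mbr A E (Mcls A E x2) (Mcls A E y2))"
    using x(1,2,6) y(1,2,6) by (simp add: Madd_Mcls Mbr_Mcls FA_fadd FA_fbr)
  moreover have "Mbr A E (Mcls A E x1) (Mcls A E y1) \<in> L1"
    using x y by (intro subalgD(5)[OF direct_sumD(1)[OF ds]])
  moreover have "Mbr A E (Mcls A E x2) (Mcls A E y2) \<in> L2"
    using x y by (intro subalgD(5)[OF direct_sumD(2)[OF ds]])
  ultimately show ?thesis using proj2_Madd_components[OF ds] x(5) y(5) by simp
qed

lemma lin_coeff_cross_eq:
  assumes ds: "direct_sum A E L1 L2" and "X \<in> L1" "Y \<in> L2" "\<not> E p q" "\<not> E q p"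
  shows "lin_coeff X p * lin_coeff Y q = lin_coeff X q * lin_coeff Y p"
proof -
  have "X \<in> Mset A E" "Y \<in> Mset A E"
    using assms subalgD(1)[OF direct_sumD(1)[OF ds]] subalgD(1)[OF direct_sumD(2)[OF ds]] by blast+
  then have "lin_coeff X p * lin_coeff Y q - lin_coeff X q * lin_coeff Y p
      = comm_coeff (Mbr A E X Y) p q"
    using assms(4,5) by (simp add: comm_coeff_Mbr)
  also have "\<dots> = 0"
    using direct_sumD(3)[OF ds assms(2,3)] comm_coeff_Mzero[where A = A and E = E, OF assms(4,5)]
    by simp
  finally show ?thesis by simp
qed

subsection \<open>The projection onto L2 on the derived algebra\<close>

context
  fixes A E L1 L2
  assumes ds: "direct_sum A E L1 L2"
    and gen_lin: "\<And>b a. b \<in> A \<Longrightarrow> lin_coeff (proj2 A E L1 L2 (Mgen A E b)) a = 0"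
begin

lemma proj2_fmon_Br_eq:
  assumes "gens u \<subseteq> A" "gens w \<subseteq> A"
  shows "proj2 A E L1 L2 (Mcls A E (fmon (Br u w)))
    = Mbr A E (proj2 A E L1 L2 (Mcls A E (fmon u))) (proj2 A E L1 L2 (Mcls A E (fmon w)))"
  unfolding Mcls_fmon_Br[OF assms]
  using assms by (simp add: proj2_Mbr[OF ds] Mcls_in_Mset FA_fmon)

lemma lin_coeff_proj2_fmon:
  assumes "gens t \<subseteq> A"
  shows "lin_coeff (proj2 A E L1 L2 (Mcls A E (fmon t))) a = 0"
  using assms
proof (induction t)
  case (Gen b)
  then show ?case using gen_lin by (simp add: Mgen_def fgen_eq_fmon)
next
  case (Br u w)
  then show ?case
    by (simp add: proj2_fmon_Br_eq lin_coeff_Mbr proj2_in_Mset[OF ds] Mcls_in_Mset FA_fmon)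
qed

lemma proj2_fmon_Br:
  assumes "gens u \<subseteq> A" "gens w \<subseteq> A"
  shows "proj2 A E L1 L2 (Mcls A E (fmon (Br u w))) = Mzero A E"
proof -
  let ?U = "proj2 A E L1 L2 (Mcls A E (fmon u))" and ?W = "proj2 A E L1 L2 (Mcls A E (fmon w))"
  have "?U \<in> Mset A E" "?W \<in> Mset A E"
    using assms by (simp_all add: proj2_in_Mset[OF ds] Mcls_in_Mset FA_fmon)
  then have "Mbr A E ?U ?W = Mzero A E"
    using assms by (intro Mbr_eq_Mzero_if_lin_coeff_zero) (simp_all add: lin_coeff_proj2_fmon)
  then show ?thesis by (simp add: proj2_fmon_Br_eq[OF assms])
qed

lemma proj2_eq_Mzero_if_lin_coeff_zero:
  assumes X: "X \<in> Mset A E" and lin: "\<forall>a. lin_coeff X a = 0"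
  shows "proj2 A E L1 L2 X = Mzero A E"
proof -
  have "zero_lin_part (Mrep X)" using lin by (simp add: zero_lin_part_def lin_coeff_def)
  with FA_Mrep[OF X] have "proj2 A E L1 L2 (Mcls A E (Mrep X)) = Mzero A E"
  proof (induction rule: zero_lin_part_induct)
    case zero
    then show ?case using proj2_Mzero[OF ds] by (simp add: Mzero_def)
  next
    case (step f u w c)
    have uw: "gens u \<subseteq> A" "gens w \<subseteq> A" using step by auto
    let ?m = "Mcls A E (fmon (Br u w))"
    have "Mcls A E (fadd f (fsmult c (fmon (Br u w)))) = Madd A E (Mcls A E f) (Msmult A E c ?m)"
      using step(1) uw by (simp add: Madd_Mcls Msmult_Mcls FA_fsmult FA_fmon)
    also have "proj2 A E L1 L2 \<dots>
        = Madd A E (proj2 A E L1 L2 (Mcls A E f)) (Msmult A E c (proj2 A E L1 L2 ?m))"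
      using step(1) uw
      by (simp add: proj2_Madd[OF ds] proj2_Msmult[OF ds] Mcls_in_Mset Msmult_in_Mset FA_fmon)
    finally show ?case
      using step.IH proj2_fmon_Br[OF uw] by (simp add: Msmult_Mzero Madd_Mzero_Mzero)
  qed
  then show ?thesis using Mcls_Mrep[OF X] by simp
qed

end

subsection \<open>The linear parts of the corrections\<close>

lemma compl_connected_neighbour:
  assumes "compl_connected A E" "card A \<ge> 2" "q \<in> A"
  obtains i where "i \<in> A" "i \<noteq> q" "\<not> E q i"
proof -
  have "\<exists>y\<in>A. y \<noteq> q"
  proof (rule ccontr)
    assume "\<not> (\<exists>y\<in>A. y \<noteq> q)"
    then have "A \<subseteq> {q}" by blast
    then have "card A \<le> 1" using card_mono[of "{q}" A] by simp
    with assms(2) show False by simp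
  qed
  then obtain y where y: "y \<in> A" "y \<noteq> q" by blast
  have "(\<lambda>u v. u \<in> A \<and> v \<in> A \<and> u \<noteq> v \<and> \<not> E u v)\<^sup>*\<^sup>* q y"
    using assms(1,3) y(1) unfolding compl_connected_def by blast
  then show ?thesis
  proof (cases rule: converse_rtranclpE)
    case base
    with y(2) show ?thesis by simp
  next
    case (step z)
    with that show ?thesis by blast
  qed
qed

lemma cross_relation_forces_zero:
  fixes v :: "'a \<Rightarrow> 'a \<Rightarrow> 'r::idom"
  assumes cross: "\<And>j p q. j \<in> A \<Longrightarrow> \<not> E p q \<Longrightarrow> \<not> E q p \<Longrightarrow>
      ((if p = i then 1 else 0) + v i p) * v j q = ((if q = i then 1 else 0) + v i q) * v j p"
    and "i \<in> A" "k \<in> A" "v i i = 0" "i \<noteq> q" "\<not> E q i" "\<not> E i q"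
  shows "v k q = 0"
proof -
  have "v i q = 0" using cross[OF assms(2) assms(7,6)] assms(4,5) by simp
  then show ?thesis using cross[OF assms(3) assms(7,6)] assms(4,5) by simp
qed

lemma lin_coeff_correction_eq_zero:
  assumes graph: "simple_graph A E" "card A \<ge> 2" "compl_connected A E"
    and ds: "direct_sum A E L1 L2"
    and in_L1: "\<And>a. a \<in> A \<Longrightarrow> Madd A E (Mgen A E a) (g a) \<in> L1"
    and in_L2: "\<And>a. a \<in> A \<Longrightarrow> g a \<in> L2"
    and diag: "\<And>a. a \<in> A \<Longrightarrow> lin_coeff (g a) a = 0"
    and j: "j \<in> A"
  shows "lin_coeff (g j) q = 0"
proof -
  have g: "g a \<in> Mset A E" if "a \<in> A" for a
    using in_L2[OF that] subalgD(1)[OF direct_sumD(2)[OF ds]] by blast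
  have cross: "((if p = i then 1 else 0) + lin_coeff (g i) p) * lin_coeff (g k) r
      = ((if r = i then 1 else 0) + lin_coeff (g i) r) * lin_coeff (g k) p"
    if "i \<in> A" "k \<in> A" "\<not> E p r" "\<not> E r p" for i k p r
    using lin_coeff_cross_eq[OF ds in_L1[OF that(1)] in_L2[OF that(2)] that(3,4)] that(1)
    by (simp add: lin_coeff_Madd lin_coeff_Mgen Mgen_in_Mset g)
  show ?thesis
  proof (cases "q \<in> A")
    case True
    then obtain i where i: "i \<in> A" "i \<noteq> q" "\<not> E q i"
      by (rule compl_connected_neighbour[OF graph(3,2)])
    then have "\<not> E i q" using graph(1) by (auto simp: simple_graph_def)
    with i show ?thesis
      using cross_relation_forces_zero[where v = "\<lambda>j. lin_coeff (g j)", OF cross[OF i(1)] i(1) j]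
        diag[OF i(1)] by simp
  qed (rule lin_coeff_notin[OF g[OF j]])
qed

theorem lemma6:
  fixes A :: "'a set" and E :: "'a \<Rightarrow> 'a \<Rightarrow> bool"
    and L1 L2 :: "('a lterm \<Rightarrow> 'r::idom) set set"
    and g :: "'a \<Rightarrow> ('a lterm \<Rightarrow> 'r) set"
  assumes "simple_graph A E" and "card A \<ge> 2"
    and "compl_connected A E"
    and "direct_sum A E L1 L2"
    and "\<forall>a\<in>A. g a \<in> Mset A E"
    and "\<forall>a\<in>A. proj1 A E L1 L2 (Mgen A E a) = Madd A E (Mgen A E a) (g a)"
    and "\<forall>a\<in>A. proj2 A E L1 L2 (Mgen A E a) = Msmult A E (-1) (g a)"
    and "\<forall>a\<in>A. a \<notin> Msupp A E (omega1 A E (g a))"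
  shows "\<forall>a\<in>A. g a = Mzero A E"
proof
  note ds = assms(4)
  have g: "g a \<in> Mset A E" if "a \<in> A" for a using assms(5) that by blast
  have in_L1: "Madd A E (Mgen A E a) (g a) \<in> L1" if "a \<in> A" for a
    using direct_sum_proj(1)[OF ds Mgen_in_Mset[OF that]] assms(6) that by simp
  have in_L2: "g a \<in> L2" if "a \<in> A" for a
    using subalgD(4)[OF direct_sumD(2)[OF ds] direct_sum_proj(2)[OF ds Mgen_in_Mset[OF that]],
        of "-1"]
    by (simp add: assms(7) that Msmult_minus_one_twice[OF g[OF that]])
  have diag: "lin_coeff (g a) a = 0" if "a \<in> A" for a
    using lin_coeff_eq_zero_if_notin_Msupp_omega1[OF g[OF that] that] assms(8) that by blast
  have lin_g: "lin_coeff (g j) q = 0" if "j \<in> A" for j q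
    by (rule lin_coeff_correction_eq_zero[OF assms(1-4)]) (use in_L1 in_L2 diag that in blast)+
  have gen_lin: "lin_coeff (proj2 A E L1 L2 (Mgen A E b)) q = 0" if "b \<in> A" for b q
    using that by (simp add: assms(7) lin_coeff_Msmult g lin_g)
  fix a assume a: "a \<in> A"
  have "proj2 A E L1 L2 (g a) = g a"
    using proj2_Madd_components[OF ds subalgD(2)[OF direct_sumD(1)[OF ds]] in_L2[OF a]]
    by (simp add: Madd_Mzero_left g a)
  moreover have "proj2 A E L1 L2 (g a) = Mzero A E"
    using proj2_eq_Mzero_if_lin_coeff_zero[OF ds gen_lin g[OF a]] lin_g[OF a] by blast
  ultimately show "g a = Mzero A E" by simp
qed

end
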